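(* Consider the infinite-horizon adaptive learning forward guidance model below, for any integer $T\ge1$ and any $\bar i<0$. (i) If interest-rate expectations are credible, then $\partial x_0/\partial i_T=-\sigma\beta^T$ and $\partial\pi_0/\partial i_T=-\lambda\sigma\beta^T$; in particular there is no forward guidance puzzle. (ii) If interest-rate expectations are not credible, then $\partial x_0/\partial i_T=\partial\pi_0/\partial i_T=0$ for every $T$; in particular there is no forward guidance puzzle.
   Context: Parameters: $0<\beta<1$, $\xi\in(0,1)$, $\lambda:=(1-\xi\beta)(1-\xi)/\xi$, $\sigma>0$, $\psi>1$, gains $\gamma_{x,t},\gamma_{\pi,t},\gamma_{i,t}$. Model: $x_t=-\sigma i_t+\hat E_t\sum_{k\ge t}\beta^{k-t}\big((1-\beta)x_{k+1}+\sigma\pi_{k+1}-\sigma\beta i_{k+1}\big)$, $\pi_t=\lambda x_t+\hat E_t\sum_{k\ge t}(\xi\beta)^{k-t}\big(\xi\beta\lambda x_{k+1}+(1-\xi)\beta\pi_{k+1}\big)$, with $\hat E_t x_{k+1}=\hat E_t x_{t+1}=\gamma_{x,t}x_{t-1}+(1-\gamma_{x,t})\hat E_{t-1}x_t$ and $\hat E_t\pi_{k+1}=\hat E_t\pi_{t+1}=\gamma_{\pi,t}\pi_{t-1}+(1-\gamma_{\pi,t})\hat E_{t-1}\pi_t$ for all $k\ge t$; initial values $x_{-1},\pi_{-1},i_{-1},\hat E_{-1}x_0,\hat E_{-1}\pi_0,\hat E_{-1}i_0$ are given and do not depend on $\bar i$. Policy: $i_t=0$ for $t=0,\dots,T-1$,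 $i_T=\bar i<0$, $i_t=\psi\pi_t$ for $t>T$. Credible interest-rate expectations at $t=0$: $\hat E_0 i_{k+1}=0$ for $k=0,\dots,T-2$, $\hat E_0 i_{T}=\bar i$, and $\hat E_0 i_{k+1}=\gamma_{i,0}i_{-1}+(1-\gamma_{i,0})\hat E_{-1}i_0$ for $k\ge T$. Non-credible: $\hat E_0 i_{k+1}=\gamma_{i,0}i_{-1}+(1-\gamma_{i,0})\hat E_{-1}i_0$ for all $k\ge0$. $\partial/\partial i_T$ denotes the derivative with respect to $\bar i$. The forward guidance puzzle means $\lim_{T\to\infty}\partial\pi_0/\partial i_T=\lim_{T\to\infty}\partial x_0/\partial i_T=-\infty$. *)

theory Defs
  imports "HOL-Analysis.Analysis"
begin

text \<open>Adaptive-learning update: E_t y_{t+1} = g * y_{t-1} + (1 - g) * E_{t-1} y_t.\<close>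
definition learn :: "real \<Rightarrow> real \<Rightarrow> real \<Rightarrow> real" where
  "learn g prev oldE = g * prev + (1 - g) * oldE"

text \<open>Policy rate at t = 0: i_t = 0 for t < T, i_T = ib (the case t > T cannot occur at t = 0).\<close>
definition i0_policy :: "nat \<Rightarrow> real \<Rightarrow> real" where
  "i0_policy T ib = (if 0 < T then 0 else ib)"

text \<open>Credible interest-rate expectations at t = 0; the k-th entry is E_0 i_{k+1};
  c is the learned value gamma_{i,0} i_{-1} + (1 - gamma_{i,0}) E_{-1} i_0.\<close>
definition Ei_cred :: "nat \<Rightarrow> real \<Rightarrow> real \<Rightarrow> nat \<Rightarrow> real" where
  "Ei_cred T ib c k = (if k + 1 < T then 0 else if k + 1 = T then ib else c)"

definition Ei_noncred :: "real \<Rightarrow> nat \<Rightarrow> real" where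
  "Ei_noncred c k = c"

text \<open>Output gap equation at t = 0; Exs k, Epi k, Ei k stand for E_0 x_{k+1}, E_0 pi_{k+1}, E_0 i_{k+1}.\<close>
definition x0_model :: "real \<Rightarrow> real \<Rightarrow> real \<Rightarrow> (nat \<Rightarrow> real) \<Rightarrow> (nat \<Rightarrow> real) \<Rightarrow> (nat \<Rightarrow> real) \<Rightarrow> real" where
  "x0_model \<sigma> \<beta> i0 Exs Epi Ei =
     - \<sigma> * i0 + (\<Sum>k. \<beta> ^ k * ((1 - \<beta>) * Exs k + \<sigma> * Epi k - \<sigma> * \<beta> * Ei k))"

definition pi0_model :: "real \<Rightarrow> real \<Rightarrow> real \<Rightarrow> real \<Rightarrow> (nat \<Rightarrow> real) \<Rightarrow> (nat \<Rightarrow> real) \<Rightarrow> real" where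
  "pi0_model lam \<xi> \<beta> x0 Exs Epi =
     lam * x0 + (\<Sum>k. (\<xi> * \<beta>) ^ k * (\<xi> * \<beta> * lam * Exs k + (1 - \<xi>) * \<beta> * Epi k))"

definition fg_puzzle :: "(nat \<Rightarrow> real) \<Rightarrow> (nat \<Rightarrow> real) \<Rightarrow> bool" where
  "fg_puzzle dpi dx = (filterlim dpi at_bot sequentially \<and> filterlim dx at_bot sequentially)"

end

theory Submission
  imports Defs
begin

text \<open>For \<open>T \<ge> 1\<close> the announced rate \<open>i\<^sub>T\<close> does not enter \<open>x\<^sub>0\<close> through the current
  policy rate \<open>i\<^sub>0 = 0\<close>. Under credible expectations it enters only through the single
  expectation \<open>E\<^sub>0 i\<^sub>T\<close>, i.e. through the term of index \<open>T - 1\<close> of the discounted sum, with weight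
  \<open>-\<sigma> \<beta>\<^sup>T\<close>; inflation inherits this effect scaled by \<open>\<lambda>\<close>. These derivatives tend to \<open>0\<close> as
  \<open>T \<rightarrow> \<infinity>\<close>. Under non-credible expectations \<open>i\<^sub>T\<close> does not enter the time-0 equations at all.\<close>

lemma summable_power_mult_Bseq:
  fixes \<beta> :: real and g :: "nat \<Rightarrow> real"
  assumes "\<bar>\<beta>\<bar> < 1" and "Bseq g"
  shows "summable (\<lambda>k. \<beta> ^ k * g k)"
proof -
  obtain M where "\<And>k. norm (g k) \<le> M"
    using \<open>Bseq g\<close> by (metis BseqE)
  then have bound: "norm (\<beta> ^ k * g k) \<le> M * \<bar>\<beta>\<bar> ^ k" for k
    by (simp add: abs_mult power_abs mult.commute mult_right_mono)
  have "summable (\<lambda>k. M * \<bar>\<beta>\<bar> ^ k)"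
    using assms(1) by (simp add: summable_geometric)
  then show ?thesis
    by (rule summable_comparison_test') (rule bound)
qed

lemma x0_model_fun_upd:
  assumes "summable (\<lambda>k. \<beta> ^ k * ((1 - \<beta>) * Exs k + \<sigma> * Epi k - \<sigma> * \<beta> * Ei k))"
  shows "x0_model \<sigma> \<beta> i0 Exs Epi (Ei(n := a))
       = x0_model \<sigma> \<beta> i0 Exs Epi Ei - \<sigma> * \<beta> ^ Suc n * (a - Ei n)"
proof -
  define t where "t Ei' k = \<beta> ^ k * ((1 - \<beta>) * Exs k + \<sigma> * Epi k - \<sigma> * \<beta> * Ei' k)" for Ei' k
  have "t (Ei(n := a)) = (\<lambda>k. t Ei k + (if k = n then - \<sigma> * \<beta> ^ Suc n * (a - Ei n) else 0))"
    by (auto simp: t_def algebra_simps)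
  also have "\<dots> sums (suminf (t Ei) + - \<sigma> * \<beta> ^ Suc n * (a - Ei n))"
    using assms unfolding t_def[symmetric]
    by (intro sums_add summable_sums sums_single[of n "\<lambda>_. - \<sigma> * \<beta> ^ Suc n * (a - Ei n)"])
  finally show ?thesis
    unfolding x0_model_def t_def by (simp add: sums_unique[symmetric])
qed

lemma i0_policy_before: "0 < T \<Longrightarrow> i0_policy T j = 0"
  by (simp add: i0_policy_def)

lemma Ei_cred_fun_upd: "0 < T \<Longrightarrow> Ei_cred T j c = (Ei_cred T 0 c)(T - 1 := j)"
  by (auto simp: Ei_cred_def fun_eq_iff)

lemma LIMSEQ_Ei_cred: "Ei_cred T j c \<longlonglongrightarrow> c"
proof -
  have "eventually (\<lambda>k. Ei_cred T j c k = c) sequentially"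
    using eventually_ge_at_top[of T] by eventually_elim (simp add: Ei_cred_def)
  then show ?thesis
    by (rule tendsto_eventually)
qed

lemma x0_model_Ei_cred:
  assumes "\<bar>\<beta>\<bar> < 1" "0 < T" "Exs \<longlonglongrightarrow> a" "Epi \<longlonglongrightarrow> b"
  shows "x0_model \<sigma> \<beta> (i0_policy T j) Exs Epi (Ei_cred T j c)
       = x0_model \<sigma> \<beta> 0 Exs Epi (Ei_cred T 0 c) - \<sigma> * \<beta> ^ T * j"
proof -
  have "(\<lambda>k. (1 - \<beta>) * Exs k + \<sigma> * Epi k - \<sigma> * \<beta> * Ei_cred T 0 c k)
          \<longlonglongrightarrow> (1 - \<beta>) * a + \<sigma> * b - \<sigma> * \<beta> * c"
    using assms(3,4) LIMSEQ_Ei_cred by (intro tendsto_intros)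
  then have "summable (\<lambda>k. \<beta> ^ k * ((1 - \<beta>) * Exs k + \<sigma> * Epi k - \<sigma> * \<beta> * Ei_cred T 0 c k))"
    using assms(1) convergentI convergent_imp_Bseq summable_power_mult_Bseq by blast
  moreover have "Ei_cred T 0 c (T - 1) = 0" and "Suc (T - 1) = T"
    using \<open>0 < T\<close> by (auto simp: Ei_cred_def)
  ultimately show ?thesis
    using \<open>0 < T\<close> by (simp add: i0_policy_before Ei_cred_fun_upd[of T j] x0_model_fun_upd)
qed

lemma has_real_derivative_x0_model_Ei_cred:
  assumes "\<bar>\<beta>\<bar> < 1" "0 < T" "Exs \<longlonglongrightarrow> a" "Epi \<longlonglongrightarrow> b"
  shows "((\<lambda>j. x0_model \<sigma> \<beta> (i0_policy T j) Exs Epi (Ei_cred T j c))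
           has_real_derivative - \<sigma> * \<beta> ^ T) (at j0)"
  unfolding x0_model_Ei_cred[OF assms] by (auto intro!: derivative_eq_intros)

lemma has_real_derivative_x0_model_before_T:
  "0 < T \<Longrightarrow> ((\<lambda>j. x0_model \<sigma> \<beta> (i0_policy T j) Exs Epi Ei) has_real_derivative 0) (at j0)"
  by (simp add: i0_policy_before)

lemma pi0_model_linear: "pi0_model lam \<xi> \<beta> x0 Exs Epi = lam * x0 + pi0_model lam \<xi> \<beta> 0 Exs Epi"
  by (simp add: pi0_model_def)

lemma has_real_derivative_pi0_model:
  "(f has_real_derivative D) (at x within s) \<Longrightarrow>
     ((\<lambda>j. pi0_model lam \<xi> \<beta> (f j) Exs Epi) has_real_derivative lam * D) (at x within s)"
  by (subst pi0_model_linear) (auto intro!: derivative_eq_intros DERIV_cmult)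

lemma tendsto_imp_not_fg_puzzle: "dx \<longlonglongrightarrow> a \<Longrightarrow> \<not> fg_puzzle dpi dx"
  unfolding fg_puzzle_def using filterlim_at_bot_nhds by fastforce

theorem proposition11:
  fixes \<beta> \<xi> \<sigma> \<psi> \<gamma>x \<gamma>\<pi> \<gamma>i xm1 \<pi>m1 im1 Exm1 E\<pi>m1 Eim1 ib :: real
  assumes "0 < \<beta>" "\<beta> < 1" "0 < \<xi>" "\<xi> < 1" "0 < \<sigma>" "1 < \<psi>" "ib < 0"
  defines "lam \<equiv> (1 - \<xi> * \<beta>) * (1 - \<xi>) / \<xi>"
    and "xC \<equiv> (\<lambda>T j. x0_model \<sigma> \<beta> (i0_policy T j) (\<lambda>k::nat. learn \<gamma>x xm1 Exm1) (\<lambda>k::nat. learn \<gamma>\<pi> \<pi>m1 E\<pi>m1) (Ei_cred T j (learn \<gamma>i im1 Eim1)))"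
    and "\<pi>C \<equiv> (\<lambda>T j. pi0_model ((1 - \<xi> * \<beta>) * (1 - \<xi>) / \<xi>) \<xi> \<beta> (x0_model \<sigma> \<beta> (i0_policy T j) (\<lambda>k::nat. learn \<gamma>x xm1 Exm1) (\<lambda>k::nat. learn \<gamma>\<pi> \<pi>m1 E\<pi>m1) (Ei_cred T j (learn \<gamma>i im1 Eim1))) (\<lambda>k::nat. learn \<gamma>x xm1 Exm1) (\<lambda>k::nat. learn \<gamma>\<pi> \<pi>m1 E\<pi>m1))"
    and "xN \<equiv> (\<lambda>(T::nat) j. x0_model \<sigma> \<beta> (i0_policy T j) (\<lambda>k::nat. learn \<gamma>x xm1 Exm1) (\<lambda>k::nat. learn \<gamma>\<pi> \<pi>m1 E\<pi>m1) (Ei_noncred (learn \<gamma>i im1 Eim1)))"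
    and "\<pi>N \<equiv> (\<lambda>T j. pi0_model ((1 - \<xi> * \<beta>) * (1 - \<xi>) / \<xi>) \<xi> \<beta> (x0_model \<sigma> \<beta> (i0_policy T j) (\<lambda>k::nat. learn \<gamma>x xm1 Exm1) (\<lambda>k::nat. learn \<gamma>\<pi> \<pi>m1 E\<pi>m1) (Ei_noncred (learn \<gamma>i im1 Eim1))) (\<lambda>k::nat. learn \<gamma>x xm1 Exm1) (\<lambda>k::nat. learn \<gamma>\<pi> \<pi>m1 E\<pi>m1))"
  shows "((\<forall>T::nat. T \<ge> 1 \<longrightarrow>
             (xC T has_real_derivative (- \<sigma> * \<beta> ^ T)) (at ib) \<and>
             (\<pi>C T has_real_derivative (- lam * \<sigma> * \<beta> ^ T)) (at ib))
          \<and> \<not> fg_puzzle (\<lambda>T. deriv (\<pi>C T) ib) (\<lambda>T. deriv (xC T) ib))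
       \<and> ((\<forall>T::nat. T \<ge> 1 \<longrightarrow>
             (xN T has_real_derivative 0) (at ib) \<and>
             (\<pi>N T has_real_derivative 0) (at ib))
          \<and> \<not> fg_puzzle (\<lambda>T. deriv (\<pi>N T) ib) (\<lambda>T. deriv (xN T) ib))"
proof -
  have "\<bar>\<beta>\<bar> < 1"
    using assms(1,2) by simp
  have xC': "(xC T has_real_derivative - \<sigma> * \<beta> ^ T) (at ib)" if "T \<ge> 1" for T
    unfolding xC_def using \<open>\<bar>\<beta>\<bar> < 1\<close> that
    by (intro has_real_derivative_x0_model_Ei_cred) auto
  have \<pi>C': "(\<pi>C T has_real_derivative - lam * \<sigma> * \<beta> ^ T) (at ib)" if "T \<ge> 1" for T
  proof -
    have "(\<pi>C T has_real_derivative lam * (- \<sigma> * \<beta> ^ T)) (at ib)"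
      unfolding \<pi>C_def lam_def using xC'[OF that] unfolding xC_def
      by (rule has_real_derivative_pi0_model)
    then show ?thesis
      by (simp add: mult.assoc)
  qed
  have xN': "(xN T has_real_derivative 0) (at ib)" and \<pi>N': "(\<pi>N T has_real_derivative 0) (at ib)"
    if "T \<ge> 1" for T
    using has_real_derivative_pi0_model[OF has_real_derivative_x0_model_before_T, of T] that
    unfolding xN_def \<pi>N_def by (auto intro: has_real_derivative_x0_model_before_T)
  have "(\<lambda>T. deriv (xC T) ib) \<longlonglongrightarrow> 0"
  proof (rule Lim_transform_eventually)
    show "(\<lambda>T. - \<sigma> * \<beta> ^ T) \<longlonglongrightarrow> 0"
      using \<open>\<bar>\<beta>\<bar> < 1\<close> by (intro tendsto_mult_right_zero LIMSEQ_power_zero) simp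
    show "eventually (\<lambda>T. - \<sigma> * \<beta> ^ T = deriv (xC T) ib) sequentially"
      using eventually_ge_at_top[of 1] by eventually_elim (simp add: DERIV_imp_deriv[OF xC'])
  qed
  moreover have "(\<lambda>T. deriv (xN T) ib) \<longlonglongrightarrow> 0"
  proof (rule tendsto_eventually)
    show "eventually (\<lambda>T. deriv (xN T) ib = 0) sequentially"
      using eventually_ge_at_top[of 1] by eventually_elim (simp add: DERIV_imp_deriv[OF xN'])
  qed
  ultimately show ?thesis
    using xC' \<pi>C' xN' \<pi>N' tendsto_imp_not_fg_puzzle by blast
qed

end
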